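(* Let $n\in\mathbb{N}$ with $n\geq 2$. Then (i) $|\mu_{n}(1212)|=\sum_{k=0}^{n-2}\left((2k+1)C_{k}C_{n-k-2}+C_{k}|\mu_{n-k-1}(1212)|\right)$; (ii) as formal power series, $\mu(1212,z)=\dfrac{z(C(z)-1)}{(1-2zC(z))(1-zC(z))}$; (iii) $|\mu_{n}(1212)|=\binom{2n-1}{n-2}$.
   Context: A matching of order $n$ is a partition of $[2n]$ into blocks (edges) of size two, identified with the word in $[n]^{2n}$ where both vertices of an edge carry the same letter and letters appear in increasing order of left vertices; $1212$ is the matching $\{\{1,3\},\{2,4\}\}$. A matching $\sigma$ of order $k$ is a pattern of $\tau$ if there are $i_1<\dots<i_{2k}$ with $\{i_p,i_q\}\in\tau$ iff $\{p,q\}\in\sigma$. The rightmost edge of a matching is the edge with the largest right vertex. A matching $\lambda$ minimally contains $\sigma$ if it contains $\sigma$ and deleting its rightmost edge yields a matching not containing $\sigma$; $\mu_n(\sigma)$ is the set of such matchings of order $n$ and $\mu(\sigma,z)=\sum_{n\ge0}|\mu_n(\sigma)|z^n$. $C_n=\frac{1}{n+1}\binom{2n}{n}$ is the $n$-th Catalan number and $C(z)=\sum_{n\ge0}C_nz^n$. *)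

theory Defs
  imports "HOL-Computational_Algebra.Formal_Power_Series"
begin

definition is_matching :: "nat \<Rightarrow> nat set set \<Rightarrow> bool" where
  "is_matching n \<tau> \<longleftrightarrow>
     (\<forall>e\<in>\<tau>. card e = 2) \<and> \<Union>\<tau> = {1..2*n} \<and>
     (\<forall>e\<in>\<tau>. \<forall>e'\<in>\<tau>. e \<noteq> e' \<longrightarrow> e \<inter> e' = {})"

definition contains_pattern :: "nat set set \<Rightarrow> nat set set \<Rightarrow> nat \<Rightarrow> bool" where
  "contains_pattern \<tau> \<sigma> k \<longleftrightarrow>
     (\<exists>i :: nat \<Rightarrow> nat. strict_mono_on {1..2*k} i \<and> i ` {1..2*k} \<subseteq> \<Union>\<tau> \<and>
        (\<forall>p\<in>{1..2*k}. \<forall>q\<in>{1..2*k}. {i p, i q} \<in> \<tau> \<longleftrightarrow> {p, q} \<in> \<sigma>))"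

definition rightmost_edge :: "nat set set \<Rightarrow> nat set" where
  "rightmost_edge \<tau> = (THE e. e \<in> \<tau> \<and> Max (\<Union>\<tau>) \<in> e)"

definition mu :: "nat \<Rightarrow> nat set set \<Rightarrow> nat \<Rightarrow> nat set set set" where
  "mu n \<sigma> k = {M. is_matching n M \<and> contains_pattern M \<sigma> k \<and>
                    \<not> contains_pattern (M - {rightmost_edge M}) \<sigma> k}"

definition m1212 :: "nat set set" where
  "m1212 = {{1,3},{2,4}}"

definition catalan :: "nat \<Rightarrow> rat" where
  "catalan n = of_nat ((2*n) choose n) / of_nat (n+1)"

definition catalan_fps :: "rat fps" where
  "catalan_fps = Abs_fps catalan"

definition mu_fps :: "nat set set \<Rightarrow> nat \<Rightarrow> rat fps" where
  "mu_fps \<sigma> k = Abs_fps (\<lambda>n. of_nat (card (mu n \<sigma> k)))"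

end

theory Submission
  imports Defs
begin

(* Containing 1212 means having a crossing, so mu_n(1212) consists of the crossing matchings
   of [2n] that become noncrossing once the edge {c, 2n} through the last vertex is removed.
   Matchings of the latter kind correspond to a choice of c < 2n together with a noncrossing
   matching of the remaining 2n - 2 points, and noncrossing matchings of 2m points are counted
   by C_m (split at the partner of the smallest point).  Subtracting the C_n noncrossing
   matchings gives |mu_n(1212)| = (2n - 1) C_(n-1) - C_n.  Part (iii) is then the identity
   (2k + 1) C_k - C_(k+1) = binomial(2k + 1, k - 1), and parts (i) and (ii) are power series
   algebra with z C^2 = C - 1.  That equation is derived from the central binomial series B,
   which satisfies (1 - 4z) B' = 2B, hence B^2 (1 - 4z) = 1 and 1 - 2zC = (1 - 4z) B. *)

section \<open>Catalan numbers\<close>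

lemma Suc_times_central_binomial:
  "Suc n * (Suc (2*n) choose n) = Suc (2*n) * (2*n choose n)"
  using Suc_times_binomial_eq[of "2*n" n] binomial_symmetric[of n "Suc (2*n)"] by simp

lemma central_binomial_Suc: "2 * Suc n choose Suc n = 2 * (Suc (2*n) choose n)"
  using binomial_Suc_Suc[of "Suc (2*n)" n] binomial_symmetric[of n "Suc (2*n)"] by simp

lemma central_binomial_eq_catalan: "of_nat (2*n choose n) = of_nat (Suc n) * catalan n"
  by (simp add: catalan_def)

lemma odd_times_catalan: "of_nat (2*k+1) * catalan k = of_nat (Suc (2*k) choose k)"
proof -
  have "of_nat (Suc k) * of_nat (Suc (2*k) choose k) =
      of_nat (Suc (2*k)) * (of_nat (2*k choose k) :: rat)"
    by (simp only: of_nat_mult [symmetric] Suc_times_central_binomial)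
  also have "\<dots> = of_nat (Suc k) * (of_nat (2*k+1) * catalan k)"
    unfolding central_binomial_eq_catalan by (simp only: Suc_eq_plus1 ac_simps)
  finally show ?thesis
    by (simp only: mult_cancel_left of_nat_eq_0_iff) simp
qed

lemma catalan_Suc_recurrence:
  "of_nat (Suc (Suc n)) * catalan (Suc n) = 2 * of_nat (2*n+1) * catalan n"
proof -
  have "of_nat (Suc (Suc n)) * catalan (Suc n) = of_nat (2 * Suc n choose Suc n)"
    by (rule central_binomial_eq_catalan [symmetric])
  also have "\<dots> = 2 * of_nat (Suc (2*n) choose n)"
    by (simp only: central_binomial_Suc of_nat_mult of_nat_numeral)
  also have "\<dots> = 2 * of_nat (2*n+1) * catalan n"
    by (simp only: odd_times_catalan mult.assoc)
  finally show ?thesis .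
qed

definition central_binomial_fps :: "rat fps" where
  "central_binomial_fps = Abs_fps (\<lambda>n. of_nat (2*n choose n))"

lemma central_binomial_fps_nth: "fps_nth central_binomial_fps n = of_nat (Suc n) * catalan n"
  unfolding central_binomial_fps_def by (simp only: fps_nth_Abs_fps central_binomial_eq_catalan)

lemma fps_X_mult_deriv_nth: "fps_nth (fps_X * fps_deriv f) n = of_nat n * fps_nth f n"
  by (cases n) (simp_all add: fps_X_mult_nth)

lemma central_binomial_fps_deriv:
  "(1 - 4 * fps_X) * fps_deriv central_binomial_fps = 2 * central_binomial_fps"
proof -
  let ?B = central_binomial_fps
  have "fps_nth (fps_deriv ?B) n = of_nat (Suc n) * (2 * of_nat (2*n+1) * catalan n)" for n
    by (simp add: central_binomial_fps_nth catalan_Suc_recurrence del: of_nat_Suc)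
  then have "fps_nth (fps_deriv ?B) n - 4 * fps_nth (fps_X * fps_deriv ?B) n = 2 * fps_nth ?B n"
    for n
    unfolding fps_X_mult_deriv_nth central_binomial_fps_nth by (simp add: algebra_simps)
  then have "fps_deriv ?B - fps_const 4 * (fps_X * fps_deriv ?B) = fps_const 2 * ?B"
    by (intro fps_ext) simp
  then show ?thesis
    by (simp add: algebra_simps numeral_fps_const)
qed

lemma central_binomial_fps_square: "central_binomial_fps^2 * (1 - 4 * fps_X) = 1"
proof -
  let ?B = central_binomial_fps
  have "fps_deriv (?B^2 * (1 - 4 * fps_X)) = 2 * ?B * ((1 - 4 * fps_X) * fps_deriv ?B) - 4 * ?B^2"
    by (simp add: fps_deriv_power algebra_simps power2_eq_square)
  also have "\<dots> = 0"
    by (simp add: central_binomial_fps_deriv power2_eq_square)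
  finally have "?B^2 * (1 - 4 * fps_X) = fps_const (fps_nth (?B^2 * (1 - 4 * fps_X)) 0)"
    by (simp only: fps_deriv_eq_0_iff)
  also have "\<dots> = 1"
    by (simp add: central_binomial_fps_nth power2_eq_square catalan_def)
  finally show ?thesis .
qed

lemma catalan_fps_central_binomial_fps:
  "2 * fps_X * catalan_fps = 1 - (1 - 4 * fps_X) * central_binomial_fps"
proof -
  let ?B = central_binomial_fps
  have "2 * catalan m = 4 * fps_nth ?B m - fps_nth ?B (Suc m)" for m
    unfolding central_binomial_fps_nth catalan_Suc_recurrence by (simp add: algebra_simps)
  moreover have "fps_nth ?B 0 = 1"
    by (simp add: central_binomial_fps_nth catalan_def)
  ultimately have "fps_const 2 * (fps_X * catalan_fps) = 1 - ?B + fps_const 4 * (fps_X * ?B)"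
    by (intro fps_ext) (auto simp: fps_X_mult_nth catalan_fps_def gr0_conv_Suc)
  then show ?thesis
    by (simp add: algebra_simps numeral_fps_const)
qed

lemma catalan_fps_equation: "fps_X * catalan_fps^2 = catalan_fps - 1"
proof -
  define R where "R = (1 - 4 * fps_X) * central_binomial_fps"
  have R_square: "R^2 = 1 - 4 * fps_X"
    using central_binomial_fps_square unfolding R_def by algebra
  have "2 * fps_X * catalan_fps = 1 - R"
    unfolding R_def by (rule catalan_fps_central_binomial_fps)
  with R_square have "4 * fps_X * (fps_X * catalan_fps^2 - (catalan_fps - 1)) = 0"
    by algebra
  then show ?thesis by simp
qed

lemma catalan_Suc_convolution: "catalan (Suc n) = (\<Sum>k\<le>n. catalan k * catalan (n - k))"
proof -
  have "catalan (Suc n) = fps_nth (fps_X * catalan_fps^2) (Suc n)"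
    by (simp only: catalan_fps_equation) (simp add: catalan_fps_def)
  also have "\<dots> = fps_nth (catalan_fps * catalan_fps) n"
    by (simp add: power2_eq_square del: fps_mult_nth)
  also have "\<dots> = (\<Sum>k\<le>n. catalan k * catalan (n - k))"
    by (simp add: fps_mult_nth catalan_fps_def atLeast0AtMost)
  finally show ?thesis .
qed

lemma catalan_Suc_even_convolution:
  "(\<Sum>j<Suc (2*m). if even j then catalan (j div 2) * catalan (m - j div 2) else 0) =
     catalan (Suc m)"
  (is "(\<Sum>j<Suc (2*m). ?g j) = _")
proof -
  have "(\<Sum>j<Suc (2*m). ?g j) = (\<Sum>j\<le>Suc (2*m). ?g j)"
    by (simp add: lessThan_Suc_atMost[symmetric])
  also have "\<dots> = (\<Sum>i\<le>m. catalan i * catalan (m - i))"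
    by (simp only: sum.in_pairs_0) simp
  finally show ?thesis
    by (simp add: catalan_Suc_convolution)
qed

lemma odd_times_catalan_minus_catalan_Suc:
  assumes "k \<ge> 1"
  shows "of_nat (2*k+1) * catalan k - catalan (Suc k) = of_nat (Suc (2*k) choose (k - 1))"
proof -
  define c where "c = (of_nat (Suc (2*k) choose k) :: rat)"
  have "of_nat (Suc (Suc k)) * catalan (Suc k) = 2 * c"
    unfolding catalan_Suc_recurrence c_def odd_times_catalan [symmetric] by simp
  moreover have "k * (Suc (2*k) choose k) = Suc (Suc k) * (Suc (2*k) choose (k - 1))"
    using Suc_times_binomial_add[of "k - 1" "Suc k"] assms by (simp add: Suc_diff_le mult_2)
  then have "of_nat k * c = of_nat (Suc (Suc k)) * of_nat (Suc (2*k) choose (k - 1))"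
    unfolding c_def by (metis of_nat_mult)
  ultimately have "of_nat (Suc (Suc k)) * (c - catalan (Suc k)) =
      of_nat (Suc (Suc k)) * of_nat (Suc (2*k) choose (k - 1))"
    by (simp add: algebra_simps)
  then show ?thesis
    unfolding odd_times_catalan c_def by (simp only: mult_cancel_left of_nat_eq_0_iff) simp
qed

section \<open>Perfect and noncrossing matchings\<close>

definition matching :: "'a set set \<Rightarrow> bool" where
  "matching M \<longleftrightarrow> (\<forall>e\<in>M. card e = 2) \<and> (\<forall>e\<in>M. \<forall>e'\<in>M. e \<noteq> e' \<longrightarrow> e \<inter> e' = {})"

definition perfect_matchings :: "'a set \<Rightarrow> 'a set set set" where
  "perfect_matchings S = {M. matching M \<and> \<Union>M = S}"

definition crossing :: "'a::linorder set set \<Rightarrow> bool" where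
  "crossing M \<longleftrightarrow> (\<exists>a b c d. a < b \<and> b < c \<and> c < d \<and> {a, c} \<in> M \<and> {b, d} \<in> M)"

definition noncrossing_matchings :: "'a::linorder set \<Rightarrow> 'a set set set" where
  "noncrossing_matchings S = {M \<in> perfect_matchings S. \<not> crossing M}"

lemma matching_edge_card: "matching M \<Longrightarrow> e \<in> M \<Longrightarrow> card e = 2"
  unfolding matching_def by blast

lemma matching_edges_disjoint: "matching M \<Longrightarrow> e \<in> M \<Longrightarrow> e' \<in> M \<Longrightarrow> e \<noteq> e' \<Longrightarrow> e \<inter> e' = {}"
  unfolding matching_def by blast

lemma matching_edge_unique: "matching M \<Longrightarrow> e \<in> M \<Longrightarrow> e' \<in> M \<Longrightarrow> x \<in> e \<Longrightarrow> x \<in> e' \<Longrightarrow> e = e'"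
  unfolding matching_def by blast

lemma card_2_elem_partner:
  assumes "card e = 2" "x \<in> e"
  obtains y where "e = {x, y}" "y \<noteq> x"
proof -
  obtain u v where "e = {u, v}" "u \<noteq> v"
    using assms(1) card_2_iff by metis
  then show thesis
    using that[of v] that[of u] assms(2) by (auto simp: insert_commute)
qed

lemma matching_subset: "matching M \<Longrightarrow> N \<subseteq> M \<Longrightarrow> matching N"
  unfolding matching_def by blast

lemma crossing_mono: "crossing N \<Longrightarrow> N \<subseteq> M \<Longrightarrow> crossing M"
  unfolding crossing_def by blast

lemma perfect_matchings_subset_Pow: "perfect_matchings S \<subseteq> Pow (Pow S)"
  unfolding perfect_matchings_def by auto

lemma finite_perfect_matchings: "finite S \<Longrightarrow> finite (perfect_matchings S)"
  using perfect_matchings_subset_Pow by (rule finite_subset) simp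

lemma finite_noncrossing_matchings: "finite S \<Longrightarrow> finite (noncrossing_matchings S)"
  unfolding noncrossing_matchings_def by (simp add: finite_perfect_matchings)

lemma card_perfect_matching:
  assumes "finite S" "M \<in> perfect_matchings S"
  shows "card S = 2 * card M"
proof -
  have "finite M"
    using assms perfect_matchings_subset_Pow by (meson PowD finite_Pow_iff finite_subset subsetD)
  then show ?thesis
    using assms card_partition[of M 2] unfolding perfect_matchings_def matching_def by auto
qed

lemma noncrossing_matchings_empty: "noncrossing_matchings {} = {{}}"
proof -
  have "M = {}" if "M \<in> perfect_matchings {}" for M
    using that unfolding perfect_matchings_def matching_def by force
  then show ?thesis
    unfolding noncrossing_matchings_def crossing_def
    by (auto simp: perfect_matchings_def matching_def)
qed

lemma noncrossing_matchings_odd: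
  assumes "finite S" "odd (card S)"
  shows "noncrossing_matchings S = {}"
proof -
  have "M \<notin> perfect_matchings S" for M
    using card_perfect_matching[OF assms(1), of M] assms(2) by auto
  then show ?thesis
    unfolding noncrossing_matchings_def by blast
qed

lemma perfect_matchings_Un:
  assumes M1: "M1 \<in> perfect_matchings S1" and M2: "M2 \<in> perfect_matchings S2"
    and disj: "S1 \<inter> S2 = {}"
  shows "M1 \<union> M2 \<in> perfect_matchings (S1 \<union> S2)"
proof -
  have m1: "matching M1" and m2: "matching M2"
    using M1 M2 unfolding perfect_matchings_def by auto
  have cross: "e \<inter> e' = {}" "e' \<inter> e = {}" if "e \<in> M1" "e' \<in> M2" for e e'
    using that M1 M2 disj unfolding perfect_matchings_def by blast+
  have "matching (M1 \<union> M2)"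
    unfolding matching_def
  proof (intro conjI ballI impI)
    show "card e = 2" if "e \<in> M1 \<union> M2" for e
      using that m1 m2 matching_edge_card by blast
    show "e \<inter> e' = {}" if "e \<in> M1 \<union> M2" "e' \<in> M1 \<union> M2" "e \<noteq> e'" for e e'
      using that cross matching_edges_disjoint[OF m1] matching_edges_disjoint[OF m2]
      by (elim UnE) simp_all
  qed
  then show ?thesis
    using M1 M2 unfolding perfect_matchings_def by auto
qed

lemma perfect_matchings_singleton: "card e = 2 \<Longrightarrow> {e} \<in> perfect_matchings e"
  unfolding perfect_matchings_def matching_def by simp

lemma perfect_matchings_restrict:
  assumes M: "M \<in> perfect_matchings S" and split: "\<forall>e\<in>M. e \<subseteq> A \<or> e \<inter> A = {}"
  shows "{e \<in> M. e \<subseteq> A} \<in> perfect_matchings (S \<inter> A)"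
proof -
  have "\<Union>{e \<in> M. e \<subseteq> A} = S \<inter> A"
    using M split unfolding perfect_matchings_def by blast
  then show ?thesis
    using M matching_subset unfolding perfect_matchings_def by fastforce
qed

lemma perfect_matchings_Diff:
  assumes M: "M \<in> perfect_matchings S" and e: "e \<in> M"
  shows "M - {e} \<in> perfect_matchings (S - e)"
proof -
  have "\<Union>(M - {e}) = S - e"
    using M e matching_edges_disjoint[of M e] unfolding perfect_matchings_def by blast
  then show ?thesis
    using M matching_subset unfolding perfect_matchings_def by fastforce
qed

lemma not_crossing_insert_nested:
  assumes "a < b" and nc1: "\<not> crossing M1" and nc2: "\<not> crossing M2"
    and M1: "\<Union>M1 \<subseteq> {a<..<b}" and M2: "\<Union>M2 \<subseteq> {b<..}"
  shows "\<not> crossing (insert {a, b} (M1 \<union> M2))"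
proof
  have edge_cases: "(p = a \<and> r = b) \<or> (a < p \<and> r < b \<and> {p, r} \<in> M1) \<or> (b < p \<and> {p, r} \<in> M2)"
    if "{p, r} \<in> insert {a, b} (M1 \<union> M2)" "p < r" for p r
    using that \<open>a < b\<close> M1 M2 by (auto simp: doubleton_eq_iff)
  assume "crossing (insert {a, b} (M1 \<union> M2))"
  then obtain p q r s where "p < q" "q < r" "r < s"
    and pr: "{p, r} \<in> insert {a, b} (M1 \<union> M2)" and qs: "{q, s} \<in> insert {a, b} (M1 \<union> M2)"
    unfolding crossing_def by blast
  moreover have "\<not> ({p, r} \<in> M1 \<and> {q, s} \<in> M1)" "\<not> ({p, r} \<in> M2 \<and> {q, s} \<in> M2)"
    using nc1 nc2 \<open>p < q\<close> \<open>q < r\<close> \<open>r < s\<close> unfolding crossing_def by blast+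
  moreover have "p < r" "q < s"
    using \<open>p < q\<close> \<open>q < r\<close> \<open>r < s\<close> by order+
  ultimately show False
    using edge_cases[OF pr \<open>p < r\<close>] edge_cases[OF qs \<open>q < s\<close>] \<open>a < b\<close>
    by (elim disjE conjE; (order | blast))
qed

context
  fixes S :: "'a::linorder set" and a :: 'a
  assumes a_in: "a \<in> S" and a_min: "\<forall>x\<in>S. a \<le> x"
begin

lemma partition_by_edge_from_min:
  assumes "b \<in> S" "a < b"
  shows "S = {a, b} \<union> {x \<in> S. a < x \<and> x < b} \<union> {x \<in> S. b < x}"
  using assms a_in a_min by (auto simp: order.order_iff_strict)

lemma card_partition_by_edge_from_min:
  assumes "finite S" "b \<in> S" "a < b"
  shows "card S = 2 + card {x \<in> S. a < x \<and> x < b} + card {x \<in> S. b < x}"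
proof -
  have "card S = card ({a, b} \<union> ({x \<in> S. a < x \<and> x < b} \<union> {x \<in> S. b < x}))"
    using partition_by_edge_from_min[OF assms(2,3)] unfolding Un_assoc by (rule arg_cong)
  also have "\<dots> = card {a, b} + card ({x \<in> S. a < x \<and> x < b} \<union> {x \<in> S. b < x})"
    using assms by (intro card_Un_disjoint) auto
  also have "\<dots> = 2 + card {x \<in> S. a < x \<and> x < b} + card {x \<in> S. b < x}"
    using assms by (subst card_Un_disjoint) auto
  finally show ?thesis .
qed

lemma noncrossing_edge_from_min_separates:
  assumes M: "M \<in> noncrossing_matchings S" and ab: "{a, b} \<in> M" "a < b"
    and e: "e \<in> M" "e \<noteq> {a, b}"
  shows "e \<subseteq> {x \<in> S. a < x \<and> x < b} \<or> e \<subseteq> {x \<in> S. b < x}"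
proof (rule ccontr)
  have m: "matching M" and S: "\<Union>M = S" and nc: "\<not> crossing M"
    using M unfolding noncrossing_matchings_def perfect_matchings_def by auto
  have "e \<inter> {a, b} = {}"
    using matching_edges_disjoint[OF m e(1) ab(1) e(2)] .
  then have e_pos: "x \<in> S \<and> a < x \<and> x \<noteq> b" if "x \<in> e" for x
    using that e(1) S a_min by (auto simp: order.order_iff_strict)
  assume "\<not> ?thesis"
  then obtain x y where "x \<in> e" "y \<in> e" "x < b" "b < y"
    using e_pos by (auto simp: subset_iff) (meson neqE)
  moreover obtain z where "e = {x, z}"
    using card_2_elem_partner[OF matching_edge_card[OF m e(1)] \<open>x \<in> e\<close>] by blast
  with \<open>y \<in> e\<close> \<open>x < b\<close> \<open>b < y\<close> have "e = {x, y}"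
    by auto
  ultimately have "crossing M"
    unfolding crossing_def using e_pos ab e(1) by blast
  with nc show False ..
qed

lemma noncrossing_split_at_edge_from_min:
  assumes M: "M \<in> noncrossing_matchings S" and ab: "{a, b} \<in> M" "a < b"
  defines "inside \<equiv> {x \<in> S. a < x \<and> x < b}" and "outside \<equiv> {x \<in> S. b < x}"
  shows "M = insert {a, b} ({e \<in> M. e \<subseteq> inside} \<union> {e \<in> M. e \<subseteq> outside})"
    and "{e \<in> M. e \<subseteq> inside} \<in> noncrossing_matchings inside"
    and "{e \<in> M. e \<subseteq> outside} \<in> noncrossing_matchings outside"
proof -
  have M_pm: "M \<in> perfect_matchings S" and nc: "\<not> crossing M"
    using M unfolding noncrossing_matchings_def by auto
  have sep: "e = {a, b} \<or> e \<subseteq> inside \<or> e \<subseteq> outside" if "e \<in> M" for e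
    using noncrossing_edge_from_min_separates[OF M ab] that
    unfolding inside_def outside_def by blast
  then show "M = insert {a, b} ({e \<in> M. e \<subseteq> inside} \<union> {e \<in> M. e \<subseteq> outside})"
    using ab(1) by blast
  have "\<forall>e\<in>M. e \<subseteq> inside \<or> e \<inter> inside = {}" "\<forall>e\<in>M. e \<subseteq> outside \<or> e \<inter> outside = {}"
    using sep \<open>a < b\<close> unfolding inside_def outside_def by fastforce+
  from perfect_matchings_restrict[OF M_pm this(1)] perfect_matchings_restrict[OF M_pm this(2)]
  show "{e \<in> M. e \<subseteq> inside} \<in> noncrossing_matchings inside"
    and "{e \<in> M. e \<subseteq> outside} \<in> noncrossing_matchings outside"
    using nc crossing_mono unfolding noncrossing_matchings_def inside_def outside_def
    by (auto simp: Int_absorb1)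
qed

lemma noncrossing_join_at_edge_from_min:
  assumes "b \<in> S" "a < b"
  defines "inside \<equiv> {x \<in> S. a < x \<and> x < b}" and "outside \<equiv> {x \<in> S. b < x}"
  assumes M1: "M1 \<in> noncrossing_matchings inside" and M2: "M2 \<in> noncrossing_matchings outside"
  shows "insert {a, b} (M1 \<union> M2) \<in> noncrossing_matchings S"
    and "{e \<in> insert {a, b} (M1 \<union> M2). e \<subseteq> inside} = M1"
    and "{e \<in> insert {a, b} (M1 \<union> M2). e \<subseteq> outside} = M2"
proof -
  have pm1: "M1 \<in> perfect_matchings inside" and pm2: "M2 \<in> perfect_matchings outside"
    and nc1: "\<not> crossing M1" and nc2: "\<not> crossing M2"
    using M1 M2 unfolding noncrossing_matchings_def by auto
  have U1: "\<Union>M1 = inside" and U2: "\<Union>M2 = outside"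
    using pm1 pm2 unfolding perfect_matchings_def by auto
  have "M1 \<union> M2 \<in> perfect_matchings (inside \<union> outside)"
    by (rule perfect_matchings_Un[OF pm1 pm2]) (auto simp: inside_def outside_def)
  moreover have "card {a, b} = 2" "{a, b} \<inter> (inside \<union> outside) = {}"
    using \<open>a < b\<close> unfolding inside_def outside_def by auto
  ultimately have "{{a, b}} \<union> (M1 \<union> M2) \<in> perfect_matchings ({a, b} \<union> (inside \<union> outside))"
    using perfect_matchings_Un perfect_matchings_singleton by blast
  moreover have "\<not> crossing (insert {a, b} (M1 \<union> M2))"
    by (rule not_crossing_insert_nested[OF \<open>a < b\<close> nc1 nc2])
      (auto simp: U1 U2 inside_def outside_def)
  ultimately show "insert {a, b} (M1 \<union> M2) \<in> noncrossing_matchings S"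
    using partition_by_edge_from_min[OF assms(1,2)]
    unfolding noncrossing_matchings_def inside_def outside_def by (simp add: Un_assoc)
  have "e \<noteq> {}" if "e \<in> M1 \<union> M2" for e
    using that pm1 pm2 matching_edge_card unfolding perfect_matchings_def by fastforce
  moreover have "inside \<inter> outside = {}" "\<not> {a, b} \<subseteq> inside" "\<not> {a, b} \<subseteq> outside"
    unfolding inside_def outside_def by auto
  ultimately show "{e \<in> insert {a, b} (M1 \<union> M2). e \<subseteq> inside} = M1"
    and "{e \<in> insert {a, b} (M1 \<union> M2). e \<subseteq> outside} = M2"
    using U1 U2 by blast+
qed

lemma inj_on_noncrossing_join:
  "inj_on (\<lambda>(b, M1, M2). insert {a, b} (M1 \<union> M2))
     (SIGMA b:S - {a}. noncrossing_matchings {x \<in> S. a < x \<and> x < b} \<times>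
                      noncrossing_matchings {x \<in> S. b < x})"
  (is "inj_on ?join ?D")
proof (rule inj_onI)
  fix x y
  assume x: "x \<in> ?D" and y: "y \<in> ?D" and "?join x = ?join y"
  obtain b M1 M2 where x_def: "x = (b, M1, M2)"
    by (cases x)
  obtain b' M1' M2' where y_def: "y = (b', M1', M2')"
    by (cases y)
  from \<open>?join x = ?join y\<close> have eq: "insert {a, b} (M1 \<union> M2) = insert {a, b'} (M1' \<union> M2')"
    unfolding x_def y_def by simp
  have b: "b \<in> S" "b \<noteq> a" and b': "b' \<in> S" "b' \<noteq> a"
    and M1: "M1 \<in> noncrossing_matchings {x \<in> S. a < x \<and> x < b}"
    and M2: "M2 \<in> noncrossing_matchings {x \<in> S. b < x}"
    using x y unfolding x_def y_def by auto
  have "a < b"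
    using b a_min by (auto simp: order.order_iff_strict)
  note join = noncrossing_join_at_edge_from_min[OF b(1) \<open>a < b\<close>]
  have "matching (insert {a, b} (M1 \<union> M2))"
    using join(1)[OF M1 M2] unfolding noncrossing_matchings_def perfect_matchings_def by auto
  then have "{a, b} = {a, b'}"
    using eq by (intro matching_edge_unique[of _ _ _ a]) auto
  then have "b = b'"
    using b' by (auto simp: doubleton_eq_iff)
  have M1': "M1' \<in> noncrossing_matchings {x \<in> S. a < x \<and> x < b}"
    and M2': "M2' \<in> noncrossing_matchings {x \<in> S. b < x}"
    using y \<open>b = b'\<close> unfolding y_def by auto
  have "M1 = M1'" "M2 = M2'"
    using join(2,3)[OF M1 M2] join(2,3)[OF M1' M2'] eq \<open>b = b'\<close> by (simp_all only:)
  with \<open>b = b'\<close> show "x = y"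
    unfolding x_def y_def by simp
qed

lemma noncrossing_matchings_subset_join_image:
  "noncrossing_matchings S \<subseteq> (\<lambda>(b, M1, M2). insert {a, b} (M1 \<union> M2)) `
     (SIGMA b:S - {a}. noncrossing_matchings {x \<in> S. a < x \<and> x < b} \<times>
                      noncrossing_matchings {x \<in> S. b < x})"
proof
  fix M
  assume M: "M \<in> noncrossing_matchings S"
  then have m: "matching M" and "\<Union>M = S"
    unfolding noncrossing_matchings_def perfect_matchings_def by auto
  then obtain e where e: "e \<in> M" "a \<in> e"
    using a_in by blast
  then obtain b where "e = {a, b}" "b \<noteq> a"
    using matching_edge_card[OF m e(1)] card_2_elem_partner by metis
  with e \<open>\<Union>M = S\<close> have b: "b \<in> S" "b \<noteq> a" "{a, b} \<in> M"
    by auto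
  then have "a < b"
    using a_min by (auto simp: order.order_iff_strict)
  note split = noncrossing_split_at_edge_from_min[OF M b(3) this]
  show "M \<in> (\<lambda>(b, M1, M2). insert {a, b} (M1 \<union> M2)) `
     (SIGMA b:S - {a}. noncrossing_matchings {x \<in> S. a < x \<and> x < b} \<times>
                      noncrossing_matchings {x \<in> S. b < x})"
    using split b by (intro image_eqI[of _ _ "(b, {e \<in> M. e \<subseteq> {x \<in> S. a < x \<and> x < b}},
        {e \<in> M. e \<subseteq> {x \<in> S. b < x}})"]) auto
qed

lemma bij_betw_noncrossing_join:
  "bij_betw (\<lambda>(b, M1, M2). insert {a, b} (M1 \<union> M2))
     (SIGMA b:S - {a}. noncrossing_matchings {x \<in> S. a < x \<and> x < b} \<times>
                      noncrossing_matchings {x \<in> S. b < x})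
     (noncrossing_matchings S)"
proof -
  have "a < b" if "b \<in> S - {a}" for b
    using that a_min by (auto simp: order.order_iff_strict)
  then have "(\<lambda>(b, M1, M2). insert {a, b} (M1 \<union> M2)) `
     (SIGMA b:S - {a}. noncrossing_matchings {x \<in> S. a < x \<and> x < b} \<times>
                      noncrossing_matchings {x \<in> S. b < x}) \<subseteq> noncrossing_matchings S"
    using noncrossing_join_at_edge_from_min(1) by auto
  then show ?thesis
    unfolding bij_betw_def
    using inj_on_noncrossing_join noncrossing_matchings_subset_join_image by blast
qed

lemma card_noncrossing_matchings_sum:
  assumes "finite S"
  shows "card (noncrossing_matchings S) =
    (\<Sum>b\<in>S - {a}. card (noncrossing_matchings {x \<in> S. a < x \<and> x < b}) *
                   card (noncrossing_matchings {x \<in> S. b < x}))"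
  using bij_betw_same_card[OF bij_betw_noncrossing_join] assms
  by (simp add: card_SigmaI finite_noncrossing_matchings card_cartesian_product)

end

lemma bij_betw_card_less:
  fixes A :: "'a::linorder set"
  assumes "finite A"
  shows "bij_betw (\<lambda>x. card {y \<in> A. y < x}) A {..<card A}"
proof -
  let ?rank = "\<lambda>x. card {y \<in> A. y < x}"
  have strict_mono: "?rank x < ?rank x'" if "x \<in> A" "x < x'" for x x'
    using that assms by (intro psubset_card_mono) auto
  have "inj_on ?rank A"
  proof (rule inj_onI)
    fix x x' assume "x \<in> A" "x' \<in> A" "?rank x = ?rank x'"
    then show "x = x'"
      using strict_mono[of x x'] strict_mono[of x' x] by (cases x x' rule: linorder_cases) auto
  qed
  moreover have "?rank ` A \<subseteq> {..<card A}"
  proof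
    fix r
    assume "r \<in> ?rank ` A"
    then obtain x where "x \<in> A" "r = ?rank x" by blast
    then have "{y \<in> A. y < x} \<subset> A" by auto
    then show "r \<in> {..<card A}"
      using assms \<open>r = ?rank x\<close> by (simp add: psubset_card_mono)
  qed
  moreover have "card (?rank ` A) = card {..<card A}"
    using card_image[OF \<open>inj_on ?rank A\<close>] by simp
  ultimately show ?thesis
    unfolding bij_betw_def by (simp add: card_subset_eq)
qed

lemma card_noncrossing_matchings_product:
  fixes A B :: "'a::linorder set"
  assumes "finite A" "finite B" "card A + card B = 2 * m"
    and IH: "\<And>k (S :: 'a set). k \<le> m \<Longrightarrow> finite S \<Longrightarrow> card S = 2 * k \<Longrightarrow>
               of_nat (card (noncrossing_matchings S)) = catalan k"
  shows "of_nat (card (noncrossing_matchings A) * card (noncrossing_matchings B)) =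
    (if even (card A) then catalan (card A div 2) * catalan (m - card A div 2) else 0)"
proof (cases "even (card A)")
  case True
  then obtain i where i: "card A = 2 * i" by blast
  with assms(3) have "card B = 2 * (m - i)" "i \<le> m" by auto
  then show ?thesis
    using IH[of i A] IH[of "m - i" B] assms(1,2) i by simp
next
  case False
  then show ?thesis
    using noncrossing_matchings_odd[OF assms(1)] by simp
qed

lemma card_noncrossing_matchings:
  assumes "finite S" "card S = 2 * n"
  shows "of_nat (card (noncrossing_matchings S)) = catalan n"
  using assms
proof (induction n arbitrary: S rule: less_induct)
  case (less n)
  show ?case
  proof (cases n)
    case 0
    with less.prems have "S = {}" by simp
    then show ?thesis
      using \<open>n = 0\<close> by (simp add: noncrossing_matchings_empty catalan_def)
  next
    case (Suc m)
    define a where "a = Min S"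
    define T where "T = S - {a}"
    have "S \<noteq> {}" using less.prems Suc by auto
    then have a: "a \<in> S" "\<forall>x\<in>S. a \<le> x"
      using less.prems(1) unfolding a_def by auto
    have T: "finite T" "card T = Suc (2 * m)"
      using less.prems a(1) Suc unfolding T_def by auto
    define g where
      "g j = (if even j then catalan (j div 2) * catalan (m - j div 2) else 0)" for j
    have summand: "of_nat (card (noncrossing_matchings {x \<in> S. a < x \<and> x < b}) *
        card (noncrossing_matchings {x \<in> S. b < x})) = g (card {y \<in> T. y < b})"
      if "b \<in> T" for b
    proof -
      have "a < b"
        using that a unfolding T_def by (auto simp: order.order_iff_strict)
      moreover have inside: "{x \<in> S. a < x \<and> x < b} = {y \<in> T. y < b}"
        using a unfolding T_def by (auto simp: order.order_iff_strict)
      ultimately have "card {y \<in> T. y < b} + card {x \<in> S. b < x} = 2 * m"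
        using card_partition_by_edge_from_min[OF a less.prems(1) _ \<open>a < b\<close>] that
          less.prems(2) Suc unfolding T_def by simp
      then show ?thesis
        unfolding inside g_def using T(1) less.prems(1) Suc
        by (intro card_noncrossing_matchings_product less.IH) auto
    qed
    have "of_nat (card (noncrossing_matchings S)) =
        (\<Sum>b\<in>T. of_nat (card (noncrossing_matchings {x \<in> S. a < x \<and> x < b}) *
                       card (noncrossing_matchings {x \<in> S. b < x})))"
      using card_noncrossing_matchings_sum[OF a less.prems(1)] unfolding T_def by simp
    also have "\<dots> = (\<Sum>b\<in>T. g (card {y \<in> T. y < b}))"
      using summand by simp
    also have "\<dots> = (\<Sum>j<Suc (2 * m). g j)"
      using sum.reindex_bij_betw[OF bij_betw_card_less[OF T(1)], of g] T(2) by simp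
    also have "\<dots> = catalan n"
      unfolding g_def Suc by (rule catalan_Suc_even_convolution)
    finally show ?thesis .
  qed
qed

section \<open>Minimal containment of 1212\<close>

lemma is_matching_iff_perfect_matchings: "is_matching n M \<longleftrightarrow> M \<in> perfect_matchings {1..2*n}"
  unfolding is_matching_def perfect_matchings_def matching_def by auto

lemma contains_1212_imp_crossing: "contains_pattern M m1212 2 \<Longrightarrow> crossing M"
proof -
  assume "contains_pattern M m1212 2"
  then obtain i where mono: "strict_mono_on {1..4} i"
    and edges: "\<forall>p\<in>{1..4}. \<forall>q\<in>{1..4}. {i p, i q} \<in> M \<longleftrightarrow> {p, q} \<in> m1212"
    unfolding contains_pattern_def by auto
  have "i 1 < i 2" "i 2 < i 3" "i 3 < i 4"
    using mono unfolding strict_mono_on_def by auto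
  moreover have "{i 1, i 3} \<in> M" "{i 2, i 4} \<in> M"
    using edges unfolding m1212_def by auto
  ultimately show "crossing M"
    unfolding crossing_def by blast
qed

lemma crossing_imp_contains_1212:
  assumes M: "matching M" and "crossing M"
  shows "contains_pattern M m1212 2"
proof -
  obtain a b c d where order: "a < b" "b < c" "c < d" and ac: "{a, c} \<in> M" and bd: "{b, d} \<in> M"
    using \<open>crossing M\<close> unfolding crossing_def by blast
  define i where
    "i p = (if p = 1 then a else if p = 2 then b else if p = (3::nat) then c else d)" for p
  have range4: "p \<in> {1..4} \<longleftrightarrow> p = 1 \<or> p = 2 \<or> p = 3 \<or> p = (4::nat)" for p
    by auto
  have edge_iff: "{i p, i q} \<in> M \<longleftrightarrow> {i p, i q} = {a, c} \<or> {i p, i q} = {b, d}" for p q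
  proof
    assume pq: "{i p, i q} \<in> M"
    have "i p \<in> {a, c} \<or> i p \<in> {b, d}"
      unfolding i_def by simp
    then show "{i p, i q} = {a, c} \<or> {i p, i q} = {b, d}"
      using matching_edge_unique[OF M pq ac, of "i p"] matching_edge_unique[OF M pq bd, of "i p"]
      by auto
  qed (use ac bd in auto)
  have "strict_mono_on {1..4} i"
    unfolding strict_mono_on_def range4 using order by (auto simp: i_def)
  moreover have "i ` {1..4} \<subseteq> \<Union>M"
    using ac bd unfolding range4 i_def by auto
  moreover have "\<forall>p\<in>{1..4}. \<forall>q\<in>{1..4}. {i p, i q} \<in> M \<longleftrightarrow> {p, q} \<in> m1212"
    unfolding edge_iff range4 using order by (auto simp: i_def m1212_def doubleton_eq_iff)
  ultimately show "contains_pattern M m1212 2"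
    unfolding contains_pattern_def by auto
qed

lemma contains_1212_iff_crossing: "matching M \<Longrightarrow> contains_pattern M m1212 2 \<longleftrightarrow> crossing M"
  using contains_1212_imp_crossing crossing_imp_contains_1212 by blast

lemma rightmost_edge_eq:
  assumes M: "M \<in> perfect_matchings {1..2*n}" and e: "e \<in> M" "2*n \<in> e" and "n \<ge> 1"
  shows "rightmost_edge M = e"
proof -
  have m: "matching M" and U: "\<Union>M = {1..2*n}"
    using M unfolding perfect_matchings_def by auto
  have Max: "Max (\<Union>M) = 2*n"
    unfolding U using \<open>n \<ge> 1\<close> by (intro Max_eqI) auto
  have unique: "e' = e" if "e' \<in> M \<and> 2*n \<in> e'" for e'
    using matching_edge_unique[OF m _ e(1) _ e(2)] that by blast
  show ?thesis
    unfolding rightmost_edge_def Max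
    by (rule the_equality) (use e unique in blast)+
qed

lemma rightmost_edge_in:
  assumes M: "M \<in> perfect_matchings {1..2*n}" and "n \<ge> 1"
  shows "rightmost_edge M \<in> M" "2*n \<in> rightmost_edge M"
proof -
  have "2*n \<in> \<Union>M"
    using M \<open>n \<ge> 1\<close> unfolding perfect_matchings_def by simp
  then obtain e where "e \<in> M" "2*n \<in> e"
    by blast
  with rightmost_edge_eq[OF M _ _ \<open>n \<ge> 1\<close>] show "rightmost_edge M \<in> M" "2*n \<in> rightmost_edge M"
    by auto
qed

definition noncrossing_without_rightmost :: "nat \<Rightarrow> nat set set set" where
  "noncrossing_without_rightmost n =
     {M \<in> perfect_matchings {1..2*n}. \<not> crossing (M - {rightmost_edge M})}"

lemma mu_1212_eq: "mu n m1212 2 = noncrossing_without_rightmost n - noncrossing_matchings {1..2*n}"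
proof -
  have "M \<in> mu n m1212 2 \<longleftrightarrow> M \<in> noncrossing_without_rightmost n - noncrossing_matchings {1..2*n}"
    if "M \<in> perfect_matchings {1..2*n}" for M
  proof -
    have "matching M"
      using that unfolding perfect_matchings_def by auto
    moreover have "matching (M - {rightmost_edge M})"
      using matching_subset[OF \<open>matching M\<close>] by blast
    ultimately show ?thesis
      using that contains_1212_iff_crossing
      unfolding mu_def noncrossing_without_rightmost_def noncrossing_matchings_def
        is_matching_iff_perfect_matchings
      by auto
  qed
  then show ?thesis
    unfolding mu_def noncrossing_without_rightmost_def is_matching_iff_perfect_matchings by blast
qed

lemma mu_1212_0: "mu 0 m1212 2 = {}"
proof -
  have "\<not> contains_pattern M m1212 2" if "\<Union>M = {}" for M
    unfolding contains_pattern_def that by simp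
  then show ?thesis
    unfolding mu_def is_matching_def by auto
qed

lemma noncrossing_subset_without_rightmost:
  "noncrossing_matchings {1..2*n} \<subseteq> noncrossing_without_rightmost n"
  unfolding noncrossing_matchings_def noncrossing_without_rightmost_def using crossing_mono by blast

lemma insert_rightmost_edge:
  assumes "n \<ge> 1" and c: "c \<in> {1..<2*n}" and N: "N \<in> perfect_matchings ({1..<2*n} - {c})"
  shows "insert {c, 2*n} N \<in> perfect_matchings {1..2*n}"
    and "rightmost_edge (insert {c, 2*n} N) = {c, 2*n}"
    and "insert {c, 2*n} N - {{c, 2*n}} = N"
proof -
  have "{{c, 2*n}} \<union> N \<in> perfect_matchings ({c, 2*n} \<union> ({1..<2*n} - {c}))"
    using c by (intro perfect_matchings_Un[OF perfect_matchings_singleton N]) auto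
  moreover have "{c, 2*n} \<union> ({1..<2*n} - {c}) = {1..2*n}"
    using c \<open>n \<ge> 1\<close> by auto
  ultimately show pm: "insert {c, 2*n} N \<in> perfect_matchings {1..2*n}"
    by simp
  show "rightmost_edge (insert {c, 2*n} N) = {c, 2*n}"
    by (rule rightmost_edge_eq[OF pm _ _ \<open>n \<ge> 1\<close>]) auto
  have "{c, 2*n} \<notin> N"
    using N unfolding perfect_matchings_def by auto
  then show "insert {c, 2*n} N - {{c, 2*n}} = N"
    by simp
qed

lemma noncrossing_without_rightmost_decompose:
  assumes "n \<ge> 1" and M: "M \<in> noncrossing_without_rightmost n"
  obtains c where "c \<in> {1..<2*n}" "M - {{c, 2*n}} \<in> noncrossing_matchings ({1..<2*n} - {c})"
    "M = insert {c, 2*n} (M - {{c, 2*n}})"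
proof -
  have pm: "M \<in> perfect_matchings {1..2*n}" and nc: "\<not> crossing (M - {rightmost_edge M})"
    using M unfolding noncrossing_without_rightmost_def by auto
  define e where "e = rightmost_edge M"
  have e: "e \<in> M" "2*n \<in> e"
    using rightmost_edge_in[OF pm \<open>n \<ge> 1\<close>] unfolding e_def by auto
  moreover have "card e = 2"
    using pm e(1) matching_edge_card unfolding perfect_matchings_def by blast
  ultimately obtain c where c: "e = {c, 2*n}" "c \<noteq> 2*n"
    by (metis card_2_elem_partner insert_commute)
  have "c \<in> \<Union>M"
    using e c by auto
  moreover have "\<Union>M = {1..2*n}"
    using pm unfolding perfect_matchings_def by simp
  ultimately have "c \<in> {1..<2*n}"
    using c(2) by simp
  moreover have "{1..2*n} - e = {1..<2*n} - {c}"
    using c(1) by auto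
  then have "M - {e} \<in> noncrossing_matchings ({1..<2*n} - {c})"
    using perfect_matchings_Diff[OF pm e(1)] nc unfolding noncrossing_matchings_def e_def by simp
  ultimately show ?thesis
    using that e(1) c(1) by blast
qed

lemma bij_betw_noncrossing_without_rightmost:
  assumes "n \<ge> 1"
  shows "bij_betw (\<lambda>(c, N). insert {c, 2*n} N)
           (SIGMA c:{1..<2*n}. noncrossing_matchings ({1..<2*n} - {c}))
           (noncrossing_without_rightmost n)"
  (is "bij_betw ?add ?D _")
proof -
  note add = insert_rightmost_edge[OF assms]
  have "inj_on ?add ?D"
  proof (rule inj_onI)
    fix x y
    assume x: "x \<in> ?D" and y: "y \<in> ?D" and eq: "?add x = ?add y"
    obtain c N where x_def: "x = (c, N)" by (cases x)
    obtain c' N' where y_def: "y = (c', N')" by (cases y)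
    have c: "c \<in> {1..<2*n}" "N \<in> perfect_matchings ({1..<2*n} - {c})"
      and c': "c' \<in> {1..<2*n}" "N' \<in> perfect_matchings ({1..<2*n} - {c'})"
      using x y unfolding x_def y_def noncrossing_matchings_def by auto
    have eq': "insert {c, 2*n} N = insert {c', 2*n} N'"
      using eq unfolding x_def y_def by simp
    have "{c, 2*n} = {c', 2*n}"
      using add(2)[OF c] add(2)[OF c'] unfolding eq' by simp
    then have "c = c'"
      by (auto simp: doubleton_eq_iff)
    moreover have "N = N'"
      using add(3)[OF c] add(3)[OF c'] eq' \<open>c = c'\<close> by metis
    ultimately show "x = y"
      unfolding x_def y_def by simp
  qed
  moreover have "?add ` ?D \<subseteq> noncrossing_without_rightmost n"
    using add unfolding noncrossing_matchings_def noncrossing_without_rightmost_def by auto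
  moreover have "noncrossing_without_rightmost n \<subseteq> ?add ` ?D"
  proof
    fix M
    assume "M \<in> noncrossing_without_rightmost n"
    then obtain c where "c \<in> {1..<2*n}" "M - {{c, 2*n}} \<in> noncrossing_matchings ({1..<2*n} - {c})"
      "M = insert {c, 2*n} (M - {{c, 2*n}})"
      using noncrossing_without_rightmost_decompose[OF assms] by blast
    then show "M \<in> ?add ` ?D"
      by (auto intro!: image_eqI[of _ _ "(c, M - {{c, 2*n}})"])
  qed
  ultimately show ?thesis
    unfolding bij_betw_def by blast
qed

lemma card_noncrossing_without_rightmost:
  assumes "n \<ge> 1"
  shows "of_nat (card (noncrossing_without_rightmost n)) = of_nat (2*n - 1) * catalan (n - 1)"
proof -
  have "card (noncrossing_without_rightmost n) =
      (\<Sum>c\<in>{1..<2*n}. card (noncrossing_matchings ({1..<2*n} - {c})))"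
    using bij_betw_same_card[OF bij_betw_noncrossing_without_rightmost[OF assms]]
    by (simp add: finite_noncrossing_matchings)
  moreover have "of_nat (card (noncrossing_matchings ({1..<2*n} - {c}))) = catalan (n - 1)"
    if "c \<in> {1..<2*n}" for c
    using that assms by (intro card_noncrossing_matchings) auto
  ultimately show ?thesis
    by simp
qed

lemma card_mu_1212:
  assumes "n \<ge> 1"
  shows "of_nat (card (mu n m1212 2)) = of_nat (2*n - 1) * catalan (n - 1) - catalan n"
proof -
  have fin: "finite (noncrossing_without_rightmost n)"
    unfolding noncrossing_without_rightmost_def
    by (rule finite_subset[OF _ finite_perfect_matchings]) auto
  have "card (mu n m1212 2) =
      card (noncrossing_without_rightmost n) - card (noncrossing_matchings {1..2*n})"
    unfolding mu_1212_eq
    by (rule card_Diff_subset[OF finite_subset[OF noncrossing_subset_without_rightmost fin]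
          noncrossing_subset_without_rightmost])
  moreover have "card (noncrossing_matchings {1..2*n}) \<le> card (noncrossing_without_rightmost n)"
    by (rule card_mono[OF fin noncrossing_subset_without_rightmost])
  moreover have "of_nat (card (noncrossing_matchings {1..2*n})) = catalan n"
    by (rule card_noncrossing_matchings) auto
  ultimately show ?thesis
    using card_noncrossing_without_rightmost[OF assms] by (simp add: of_nat_diff)
qed

section \<open>The generating function\<close>

lemma catalan_fps_deriv: "(1 - 2 * fps_X * catalan_fps) * fps_deriv catalan_fps = catalan_fps^2"
proof -
  have "fps_deriv (fps_X * catalan_fps^2) = fps_deriv (catalan_fps - 1)"
    by (simp only: catalan_fps_equation)
  then have
    "catalan_fps^2 + fps_X * (2 * catalan_fps * fps_deriv catalan_fps) = fps_deriv catalan_fps"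
    by (simp add: power2_eq_square algebra_simps)
  then show ?thesis
    by (simp add: algebra_simps)
qed

definition odd_weighted_catalan_fps :: "rat fps" where
  "odd_weighted_catalan_fps = Abs_fps (\<lambda>k. of_nat (2*k+1) * catalan k)"

lemma odd_weighted_catalan_fps_eq:
  "odd_weighted_catalan_fps = 2 * fps_X * fps_deriv catalan_fps + catalan_fps"
proof -
  have "odd_weighted_catalan_fps = fps_const 2 * (fps_X * fps_deriv catalan_fps) + catalan_fps"
    by (intro fps_ext)
      (simp add: fps_X_mult_deriv_nth odd_weighted_catalan_fps_def catalan_fps_def algebra_simps)
  then show ?thesis
    by (simp add: numeral_fps_const algebra_simps)
qed

lemma odd_weighted_catalan_fps_identity:
  "(1 - 2 * fps_X * catalan_fps) * odd_weighted_catalan_fps = catalan_fps"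
  unfolding odd_weighted_catalan_fps_eq
  using catalan_fps_deriv catalan_fps_equation by algebra

lemma mu_fps_1212_eq: "mu_fps m1212 2 = fps_X * odd_weighted_catalan_fps - (catalan_fps - 1)"
proof (rule fps_ext)
  fix n
  show "fps_nth (mu_fps m1212 2) n =
      fps_nth (fps_X * odd_weighted_catalan_fps - (catalan_fps - 1)) n"
  proof (cases n)
    case 0
    then show ?thesis
      by (simp add: mu_fps_def mu_1212_0 catalan_fps_def catalan_def)
  next
    case (Suc k)
    then show ?thesis
      using card_mu_1212[of n]
      by (simp add: mu_fps_def odd_weighted_catalan_fps_def catalan_fps_def)
  qed
qed

lemma mu_fps_1212_closed_form:
  "mu_fps m1212 2 =
     fps_X * (catalan_fps - 1) / ((1 - 2 * fps_X * catalan_fps) * (1 - fps_X * catalan_fps))"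
proof -
  define D where "D = (1 - 2 * fps_X * catalan_fps) * (1 - fps_X * catalan_fps)"
  have "fps_nth D 0 = 1"
    unfolding D_def by simp
  then have "D \<noteq> 0"
    by auto
  have "mu_fps m1212 2 * D = fps_X * (catalan_fps - 1)"
    unfolding mu_fps_1212_eq D_def
    using catalan_fps_equation odd_weighted_catalan_fps_identity by algebra
  with \<open>D \<noteq> 0\<close> show ?thesis
    unfolding D_def[symmetric] by (metis nonzero_mult_div_cancel_right)
qed

lemma mu_fps_1212_recurrence:
  "mu_fps m1212 2 =
     fps_X^2 * (odd_weighted_catalan_fps * catalan_fps) + fps_X * (catalan_fps * mu_fps m1212 2)"
  unfolding mu_fps_1212_eq
  using catalan_fps_equation odd_weighted_catalan_fps_identity by algebra

lemma card_mu_1212_recurrence: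
  assumes "n \<ge> 2"
  shows "of_nat (card (mu n m1212 2)) =
           (\<Sum>k=0..n-2. of_nat (2*k+1) * catalan k * catalan (n-k-2)
                         + catalan k * of_nat (card (mu (n-k-1) m1212 2)))"
proof -
  have mu_nth: "fps_nth (mu_fps m1212 2) m = of_nat (card (mu m m1212 2))" for m
    by (simp add: mu_fps_def)
  have "fps_nth (fps_X^2 * (odd_weighted_catalan_fps * catalan_fps)) n =
      fps_nth (odd_weighted_catalan_fps * catalan_fps) (n - 2)"
    using assms by (simp only: fps_X_power_mult_nth) simp
  also have "\<dots> = (\<Sum>k=0..n-2. of_nat (2*k+1) * catalan k * catalan (n-k-2))"
    by (simp add: fps_mult_nth odd_weighted_catalan_fps_def catalan_fps_def diff_right_commute)
  finally have first: "fps_nth (fps_X^2 * (odd_weighted_catalan_fps * catalan_fps)) n =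
      (\<Sum>k=0..n-2. of_nat (2*k+1) * catalan k * catalan (n-k-2))" .
  have "fps_nth (fps_X * (catalan_fps * mu_fps m1212 2)) n =
      fps_nth (catalan_fps * mu_fps m1212 2) (Suc (n - 2))"
    using assms by (simp only: fps_X_mult_nth) (simp add: Suc_diff_Suc numeral_2_eq_2)
  also have "\<dots> = (\<Sum>k=0..Suc (n-2). catalan k * of_nat (card (mu (Suc (n-2) - k) m1212 2)))"
    by (simp only: fps_mult_nth mu_nth) (simp add: catalan_fps_def)
  also have "\<dots> = (\<Sum>k=0..n-2. catalan k * of_nat (card (mu (n-k-1) m1212 2)))"
    using assms by (simp add: mu_1212_0 Suc_diff_Suc)
  finally have second: "fps_nth (fps_X * (catalan_fps * mu_fps m1212 2)) n =
      (\<Sum>k=0..n-2. catalan k * of_nat (card (mu (n-k-1) m1212 2)))" .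
  show ?thesis
    using arg_cong[OF mu_fps_1212_recurrence, of "\<lambda>f. fps_nth f n"] first second
    by (simp add: mu_nth sum.distrib)
qed

lemma card_mu_1212_binomial:
  assumes "n \<ge> 2"
  shows "card (mu n m1212 2) = (2*n-1) choose (n-2)"
proof -
  have "(of_nat (card (mu n m1212 2)) :: rat) = of_nat (2*n - 1) * catalan (n - 1) - catalan n"
    using assms by (intro card_mu_1212) simp
  also have "\<dots> = of_nat ((2*n-1) choose (n-2))"
    using odd_times_catalan_minus_catalan_Suc[of "n - 1"] assms
    by (simp add: Suc_diff_Suc numeral_2_eq_2 algebra_simps)
  finally show ?thesis
    by (simp only: of_nat_eq_iff)
qed

theorem proposition3:
  fixes n :: nat
  assumes "n \<ge> 2"
  shows "(of_nat (card (mu n m1212 2)) =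
           (\<Sum>k=0..n-2. of_nat (2*k+1) * catalan k * catalan (n-k-2)
                         + catalan k * of_nat (card (mu (n-k-1) m1212 2))))
       \<and> (mu_fps m1212 2 =
           fps_X * (catalan_fps - 1) /
           ((1 - 2 * fps_X * catalan_fps) * (1 - fps_X * catalan_fps)))
       \<and> (card (mu n m1212 2) = (2*n-1) choose (n-2))"
  using card_mu_1212_recurrence[OF assms] mu_fps_1212_closed_form card_mu_1212_binomial[OF assms]
  by blast

end
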